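(* Let $s\ge1$ and $k\ge1$ be fixed integers. (a) Let $P_n\ge s$ be positive integers and $t_n\in[0,1]$ with $\frac{1}{s!}t_n^{2s}P_n^{s}=\frac{\ln n+(k-1)\ln\ln n+\beta_n}{n}$ and $\lim_{n\to\infty}\beta_n=-\infty$. Then there exist $\widetilde{t_n},\widetilde{P_n}$ with $\frac{1}{s!}\widetilde{t_n}^{2s}\widetilde{P_n}^{s}=\frac{\ln n+(k-1)\ln\ln n+\widetilde{\beta_n}}{n}$, $\lim_{n\to\infty}\widetilde{\beta_n}=-\infty$ and $\widetilde{\beta_n}=-O(\ln\ln n)$, such that there is a coupling under which $H_s(n,t_n,P_n)$ is a spanning subgraph of $H_s(n,\widetilde{t_n},\widetilde{P_n})$. (b) Let $P_n\ge s$ be positive integers and $t_n\in[0,1]$ with $\frac{1}{s!}t_n^{2s}P_n^{s}=\frac{\ln n+(k-1)\ln\ln n+\beta_n}{n}$ and $\lim_{n\to\infty}\beta_n=\infty$. Then there exist $\widehat{t_n},\widehat{P_n}$ with $\frac{1}{s!}\widehat{t_n}^{2s}\widehat{P_n}^{s}=\frac{\ln n+(k-1)\ln\ln n+\widehat{\beta_n}}{n}$, $\lim_{n\to\infty}\widehat{\beta_n}=\infty$ and $\widehat{\beta_n}=O(\ln\ln n)$, such that there is a coupling under which $H_s(n,t_n,P_n)$ is a spanning supergraph of $H_s(n,\widehat{t_n},\widehat{P_n})$.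
   Context: The binomial random $s$-intersection graph $H_s(n,t_n,P_n)$ has $n$ vertices and a pool of $P_n$ distinct items; each item is assigned to each vertex independently with probability $t_n$, and two vertices are adjacent iff they share at least $s$ items. A coupling of two random graphs $G_1,G_2$ on the same vertex set is a probability space carrying random graphs $G_1',G_2'$ with the distributions of $G_1,G_2$ respectively; "$G_1$ is a spanning subgraph (resp. supergraph) of $G_2$ under the coupling" means $G_1'$ is a spanning subgraph (resp. supergraph) of $G_2'$ almost surely. *)

theory Defs
  imports "HOL-Probability.Probability" "HOL-Library.Landau_Symbols"
begin

text \<open>Vertices are 0..n-1, items are 0..P-1.  A random assignment
  X (v,i) = True means item i is assigned to vertex v; all n*P indicators are
  independent Bernoulli(t).\<close>
definition item_assignment :: "nat \<Rightarrow> nat \<Rightarrow> real \<Rightarrow> (nat \<times> nat \<Rightarrow> bool) pmf" where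
  "item_assignment n P t = Pi_pmf ({..<n} \<times> {..<P}) False (\<lambda>_. bernoulli_pmf t)"

definition items_of :: "(nat \<times> nat \<Rightarrow> bool) \<Rightarrow> nat \<Rightarrow> nat \<Rightarrow> nat set" where
  "items_of X P v = {i. i < P \<and> X (v, i)}"

definition s_intersection_graph :: "nat \<Rightarrow> nat \<Rightarrow> nat \<Rightarrow> (nat \<times> nat \<Rightarrow> bool) \<Rightarrow> (nat \<times> nat) set" where
  "s_intersection_graph s n P X =
     {(u, v). u < n \<and> v < n \<and> u \<noteq> v \<and> s \<le> card (items_of X P u \<inter> items_of X P v)}"

definition binomial_s_intersection_graph :: "nat \<Rightarrow> nat \<Rightarrow> real \<Rightarrow> nat \<Rightarrow> (nat \<times> nat) set pmf" where
  "binomial_s_intersection_graph s n t P = map_pmf (s_intersection_graph s n P) (item_assignment n P t)"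

definition coupling_spanning_subgraph :: "(nat \<times> nat) set pmf \<Rightarrow> (nat \<times> nat) set pmf \<Rightarrow> bool" where
  "coupling_spanning_subgraph G1 G2 \<longleftrightarrow>
     (\<exists>\<mu> :: ((nat \<times> nat) set \<times> (nat \<times> nat) set) pmf.
        map_pmf fst \<mu> = G1 \<and> map_pmf snd \<mu> = G2 \<and> (\<forall>p \<in> set_pmf \<mu>. fst p \<subseteq> snd p))"

end

theory Submission
  imports Defs "HOL-Real_Asymp.Real_Asymp"
begin

text \<open>Adding items can only add edges, so coupling every item indicator monotonically
  (a Bernoulli(\<open>t\<close>) below a Bernoulli(\<open>t'\<close>)) shows that raising \<open>t\<close> with the item pool
  fixed yields a spanning supergraph. The deviation \<open>\<beta>\<close> is increasing in \<open>t\<close>, so \<open>t\<close> can be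
  raised to the value with deviation \<open>max \<beta> (- ln ln n)\<close>, or lowered to the value with
  deviation \<open>min \<beta> (ln ln n)\<close>. The raised value is still a probability for large \<open>n\<close>,
  because \<open>(ln n + O(ln ln n)) / n \<rightarrow> 0\<close> and \<open>P\<^sup>s \<ge> s!\<close>.\<close>

lemma bernoulli_pmf_monotone_coupling:
  fixes t t' :: real
  assumes "0 \<le> t" "t \<le> t'" "t' \<le> 1"
  obtains \<mu> where "map_pmf fst \<mu> = bernoulli_pmf t" "map_pmf snd \<mu> = bernoulli_pmf t'"
    "\<forall>z \<in> set_pmf \<mu>. fst z \<longrightarrow> snd z"
proof
  define \<mu> where "\<mu> = bernoulli_pmf t' \<bind>
    (\<lambda>b. if b then map_pmf (\<lambda>a. (a, True)) (bernoulli_pmf (t / t')) else return_pmf (False, False))"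
  have fst_\<mu>: "map_pmf fst \<mu> = bernoulli_pmf t' \<bind>
      (\<lambda>b. if b then bernoulli_pmf (t / t') else return_pmf False)"
    unfolding \<mu>_def map_bind_pmf by (intro bind_pmf_cong) (auto simp: pmf.map_comp o_def)
  have "0 \<le> t / t'" "t / t' \<le> 1"
    using assms by (auto simp: divide_simps)
  then show "map_pmf fst \<mu> = bernoulli_pmf t"
    unfolding fst_\<mu> using assms
    by (intro pmf_eqI, case_tac i) (auto simp: pmf_bind pmf_return field_simps)
  have "map_pmf snd \<mu> = bernoulli_pmf t' \<bind> return_pmf"
    unfolding \<mu>_def map_bind_pmf by (intro bind_pmf_cong) (auto simp: pmf.map_comp o_def)
  then show "map_pmf snd \<mu> = bernoulli_pmf t'"
    by (simp add: bind_return_pmf')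
  show "\<forall>z \<in> set_pmf \<mu>. fst z \<longrightarrow> snd z"
    unfolding \<mu>_def by (auto split: if_splits)
qed

lemma item_assignment_monotone_coupling:
  assumes "0 \<le> t" "t \<le> t'" "t' \<le> 1"
  obtains \<nu> where "map_pmf fst \<nu> = item_assignment n P t" "map_pmf snd \<nu> = item_assignment n P t'"
    "\<forall>(X, X') \<in> set_pmf \<nu>. \<forall>x. X x \<longrightarrow> X' x"
proof -
  obtain \<mu> where \<mu>: "map_pmf fst \<mu> = bernoulli_pmf t" "map_pmf snd \<mu> = bernoulli_pmf t'"
    "\<forall>z \<in> set_pmf \<mu>. fst z \<longrightarrow> snd z"
    using bernoulli_pmf_monotone_coupling[OF assms] by blast
  define D where "D = {..<n} \<times> {..<P}"
  define Q where "Q = Pi_pmf D (False, False) (\<lambda>_. \<mu>)"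
  have "finite D"
    by (simp add: D_def)
  show thesis
  proof
    show "map_pmf fst (map_pmf (\<lambda>f. (fst \<circ> f, snd \<circ> f)) Q) = item_assignment n P t"
      using Pi_pmf_map[OF \<open>finite D\<close>, of fst "(False, False)" False "\<lambda>_. \<mu>"]
      by (simp add: pmf.map_comp o_def \<mu> Q_def D_def item_assignment_def)
    show "map_pmf snd (map_pmf (\<lambda>f. (fst \<circ> f, snd \<circ> f)) Q) = item_assignment n P t'"
      using Pi_pmf_map[OF \<open>finite D\<close>, of snd "(False, False)" False "\<lambda>_. \<mu>"]
      by (simp add: pmf.map_comp o_def \<mu> Q_def D_def item_assignment_def)
    have "fst (f x) \<longrightarrow> snd (f x)" if "f \<in> set_pmf Q" for f x
      using that \<mu>(3) \<open>finite D\<close> by (cases "x \<in> D") (auto simp: Q_def set_Pi_pmf PiE_dflt_def simp del: split_paired_All)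
    then show "\<forall>(X, X') \<in> set_pmf (map_pmf (\<lambda>f. (fst \<circ> f, snd \<circ> f)) Q). \<forall>x. X x \<longrightarrow> X' x"
      by auto
  qed
qed

lemma s_intersection_graph_mono:
  assumes "\<And>x. X x \<Longrightarrow> X' x"
  shows "s_intersection_graph s n P X \<subseteq> s_intersection_graph s n P X'"
proof -
  have "items_of X P v \<subseteq> items_of X' P v" for v
    using assms by (auto simp: items_of_def)
  then have "card (items_of X P u \<inter> items_of X P v) \<le> card (items_of X' P u \<inter> items_of X' P v)" for u v
    by (intro card_mono) (auto simp: items_of_def)
  then show ?thesis
    unfolding s_intersection_graph_def using le_trans by fastforce
qed

lemma binomial_s_intersection_graph_coupling_mono:
  assumes "0 \<le> t" "t \<le> t'" "t' \<le> 1"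
  shows "coupling_spanning_subgraph (binomial_s_intersection_graph s n t P)
           (binomial_s_intersection_graph s n t' P)"
proof -
  obtain \<nu> where \<nu>: "map_pmf fst \<nu> = item_assignment n P t" "map_pmf snd \<nu> = item_assignment n P t'"
    "\<forall>(X, X') \<in> set_pmf \<nu>. \<forall>x. X x \<longrightarrow> X' x"
    using item_assignment_monotone_coupling[OF assms] by blast
  let ?G = "s_intersection_graph s n P"
  have "map_pmf fst (map_pmf (map_prod ?G ?G) \<nu>) = binomial_s_intersection_graph s n t P"
       "map_pmf snd (map_pmf (map_prod ?G ?G) \<nu>) = binomial_s_intersection_graph s n t' P"
    by (simp_all add: pmf.map_comp o_def binomial_s_intersection_graph_def flip: \<nu>(1,2))
  moreover have "fst p \<subseteq> snd p" if "p \<in> set_pmf (map_pmf (map_prod ?G ?G) \<nu>)" for p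
  proof -
    obtain X X' where X: "(X, X') \<in> set_pmf \<nu>" and p: "p = (?G X, ?G X')"
      using \<open>p \<in> set_pmf (map_pmf (map_prod ?G ?G) \<nu>)\<close> by auto
    have "X x \<Longrightarrow> X' x" for x
      using \<nu>(3) X by fast
    then show ?thesis
      unfolding p by (simp add: s_intersection_graph_mono)
  qed
  ultimately show ?thesis
    unfolding coupling_spanning_subgraph_def by blast
qed

lemma max_of_mono_on:
  fixes f :: "'a::linorder \<Rightarrow> 'b::linorder"
  assumes "mono_on A f" "a \<in> A" "b \<in> A"
  shows "max (f a) (f b) = f (max a b)"
  using mono_onD[OF assms(1)] assms(2,3)
  by (cases a b rule: linorder_le_cases) (auto simp: max_def intro: order.antisym)

lemma min_of_mono_on:
  fixes f :: "'a::linorder \<Rightarrow> 'b::linorder"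
  assumes "mono_on A f" "a \<in> A" "b \<in> A"
  shows "min (f a) (f b) = f (min a b)"
  using mono_onD[OF assms(1)] assms(2,3)
  by (cases a b rule: linorder_le_cases) (auto simp: min_def intro: order.antisym)

lemma filterlim_at_bot_max_uminus:
  fixes f g h :: "'a \<Rightarrow> real"
  assumes f: "filterlim f at_bot F" and h: "filterlim h at_top F"
    and g: "eventually (\<lambda>x. g x = max (f x) (- h x)) F"
  shows "filterlim g at_bot F" and "(\<lambda>x. - g x) \<in> O[F](h)"
proof -
  show "filterlim g at_bot F"
    unfolding filterlim_at_bot
  proof
    fix Z :: real
    have "eventually (\<lambda>x. f x \<le> Z) F" "eventually (\<lambda>x. - Z \<le> h x) F"
      using f h by (simp_all add: filterlim_at_bot filterlim_at_top)
    with g show "eventually (\<lambda>x. g x \<le> Z) F"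
      by eventually_elim auto
  qed
  have "eventually (\<lambda>x. f x \<le> 0) F" "eventually (\<lambda>x. 0 \<le> h x) F"
    using f h by (simp_all add: filterlim_at_bot filterlim_at_top)
  with g have "eventually (\<lambda>x. norm (- g x) \<le> 1 * norm (h x)) F"
    by eventually_elim auto
  then show "(\<lambda>x. - g x) \<in> O[F](h)"
    by (rule bigoI)
qed

lemma filterlim_at_top_min:
  fixes f g h :: "'a \<Rightarrow> real"
  assumes f: "filterlim f at_top F" and h: "filterlim h at_top F"
    and g: "eventually (\<lambda>x. g x = min (f x) (h x)) F"
  shows "filterlim g at_top F" and "g \<in> O[F](h)"
proof -
  have "filterlim (\<lambda>x. - f x) at_bot F"
    using f by (simp add: filterlim_uminus_at_top)
  moreover have "eventually (\<lambda>x. - g x = max (- f x) (- h x)) F"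
    using g by eventually_elim auto
  ultimately have "filterlim (\<lambda>x. - g x) at_bot F" "(\<lambda>x. - (- g x)) \<in> O[F](h)"
    using filterlim_at_bot_max_uminus[of "\<lambda>x. - f x" F h "\<lambda>x. - g x", OF _ h] by blast+
  then show "filterlim g at_top F" "g \<in> O[F](h)"
    by (simp_all add: filterlim_uminus_at_top)
qed

text \<open>The clamp at \<open>0\<close> keeps the inverse nonnegative also
  for targets \<open>\<beta>\<close> that no \<open>t\<close> attains (small \<open>n\<close>).\<close>

definition scaling_deviation :: "nat \<Rightarrow> nat \<Rightarrow> nat \<Rightarrow> real \<Rightarrow> nat \<Rightarrow> real" where
  "scaling_deviation s k n t P =
     real n * (t ^ (2 * s) * real P ^ s / fact s) - (ln (real n) + (real k - 1) * ln (ln (real n)))"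

definition scaling_parameter :: "nat \<Rightarrow> nat \<Rightarrow> nat \<Rightarrow> nat \<Rightarrow> real \<Rightarrow> real" where
  "scaling_parameter s k n P \<beta> =
     root (2 * s) (max 0 ((ln (real n) + (real k - 1) * ln (ln (real n)) + \<beta>) / real n * fact s / real P ^ s))"

lemma scaling_equation_iff:
  assumes "n > 0"
  shows "t ^ (2 * s) * real P ^ s / fact s = (ln (real n) + (real k - 1) * ln (ln (real n)) + \<beta>) / real n
           \<longleftrightarrow> \<beta> = scaling_deviation s k n t P"
  using assms by (auto simp: scaling_deviation_def field_simps)

lemma mono_on_scaling_deviation: "mono_on {0..} (\<lambda>t. scaling_deviation s k n t P)"
  by (rule mono_onI) (auto simp: scaling_deviation_def intro!: mult_left_mono divide_right_mono mult_right_mono power_mono)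

lemma scaling_deviation_parameter:
  assumes "s \<ge> 1" "P > 0" "n > 0" "0 \<le> ln (real n) + (real k - 1) * ln (ln (real n)) + \<beta>"
  shows "scaling_deviation s k n (scaling_parameter s k n P \<beta>) P = \<beta>"
  using assms by (simp add: scaling_deviation_def scaling_parameter_def)

lemma scaling_parameter_nonneg: "0 \<le> scaling_parameter s k n P \<beta>"
  unfolding scaling_parameter_def by (rule real_root_ge_zero) simp

lemma scaling_parameter_le_one:
  assumes "s \<ge> 1" "s \<le> P" "(ln (real n) + (real k - 1) * ln (ln (real n)) + \<beta>) / real n \<le> 1"
  shows "scaling_parameter s k n P \<beta> \<le> 1"
proof -
  have "(fact s :: real) \<le> real (s ^ s)"
    by (rule fact_le_power)
  also have "\<dots> \<le> real P ^ s"
    using assms(2) by (simp add: power_mono)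
  finally have "fact s / real P ^ s \<le> (1 :: real)"
    using assms(1,2) by (simp add: divide_le_eq)
  with assms(3) have "(ln (real n) + (real k - 1) * ln (ln (real n)) + \<beta>) / real n * (fact s / real P ^ s) \<le> 1"
    by (intro mult_le_one) simp_all
  then have "max 0 ((ln (real n) + (real k - 1) * ln (ln (real n)) + \<beta>) / real n * fact s / real P ^ s) \<le> 1"
    by (intro max.boundedI) (simp_all only: times_divide_eq_right zero_le_one)
  then show ?thesis
    unfolding scaling_parameter_def using assms(1) real_root_le_iff[of "2 * s" _ 1] by simp
qed

lemma scaling_deviation_max_parameter:
  assumes "s \<ge> 1" "P > 0" "n > 0" "0 \<le> t" "0 \<le> ln (real n) + (real k - 1) * ln (ln (real n)) + \<gamma>"
  shows "scaling_deviation s k n (max t (scaling_parameter s k n P \<gamma>)) P = max (scaling_deviation s k n t P) \<gamma>"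
  using max_of_mono_on[OF mono_on_scaling_deviation[of s k n P], of t "scaling_parameter s k n P \<gamma>", symmetric]
    scaling_deviation_parameter[OF assms(1,2,3,5)] scaling_parameter_nonneg[of s k n P \<gamma>] assms(4)
  by simp

lemma scaling_deviation_min_parameter:
  assumes "s \<ge> 1" "P > 0" "n > 0" "0 \<le> t" "0 \<le> ln (real n) + (real k - 1) * ln (ln (real n)) + \<gamma>"
  shows "scaling_deviation s k n (min t (scaling_parameter s k n P \<gamma>)) P = min (scaling_deviation s k n t P) \<gamma>"
  using min_of_mono_on[OF mono_on_scaling_deviation[of s k n P], of t "scaling_parameter s k n P \<gamma>", symmetric]
    scaling_deviation_parameter[OF assms(1,2,3,5)] scaling_parameter_nonneg[of s k n P \<gamma>] assms(4)
  by simp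

lemma binomial_s_intersection_graph_raise_deviation:
  fixes s k :: nat and t :: "nat \<Rightarrow> real" and P :: "nat \<Rightarrow> nat" and \<beta> :: "nat \<Rightarrow> real"
  assumes s: "s \<ge> 1" and k: "k \<ge> 1"
    and hP: "\<forall>n. s \<le> P n \<and> 0 \<le> t n \<and> t n \<le> 1"
    and heq: "\<forall>n\<ge>2. t n ^ (2 * s) * real (P n) ^ s / fact s
                 = (ln (real n) + (real k - 1) * ln (ln (real n)) + \<beta> n) / real n"
    and hb: "filterlim \<beta> at_bot at_top"
  shows "\<exists>(t' :: nat \<Rightarrow> real) (P' :: nat \<Rightarrow> nat) (\<beta>' :: nat \<Rightarrow> real).
           (\<forall>n. s \<le> P' n \<and> 0 \<le> t' n \<and> t' n \<le> 1) \<and>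
           (\<forall>n\<ge>2. t' n ^ (2 * s) * real (P' n) ^ s / fact s
                    = (ln (real n) + (real k - 1) * ln (ln (real n)) + \<beta>' n) / real n) \<and>
           filterlim \<beta>' at_bot at_top \<and>
           (\<lambda>n. - \<beta>' n) \<in> O(\<lambda>n. ln (ln (real n))) \<and>
           (\<forall>n. coupling_spanning_subgraph
                  (binomial_s_intersection_graph s n (t n) (P n))
                  (binomial_s_intersection_graph s n (t' n) (P' n)))"
proof -
  define r where "r n = scaling_parameter s k n (P n) (- ln (ln (real n)))" for n
  define t' where "t' n = max (t n) (min 1 (r n))" for n
  define \<beta>' where "\<beta>' n = scaling_deviation s k n (t' n) (P n)" for n
  have P_pos: "P n > 0" for n
    using s hP by (auto intro: less_le_trans)
  have t': "\<forall>n. s \<le> P n \<and> 0 \<le> t' n \<and> t' n \<le> 1"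
    using hP by (auto simp: t'_def le_max_iff_disj)
  have eq: "\<forall>n\<ge>2. t' n ^ (2 * s) * real (P n) ^ s / fact s
              = (ln (real n) + (real k - 1) * ln (ln (real n)) + \<beta>' n) / real n"
    by (simp add: scaling_equation_iff \<beta>'_def)
  have "eventually (\<lambda>n. (2::nat) \<le> n) at_top" "eventually (\<lambda>n. 0 \<le> ln (ln (real n))) at_top"
    "eventually (\<lambda>n. ln (ln (real n)) \<le> ln (real n)) at_top"
    "eventually (\<lambda>n. (ln (real n) + (real k - 1) * ln (ln (real n)) + - ln (ln (real n))) / real n \<le> 1) at_top"
    by real_asymp+
  then have "eventually (\<lambda>n. \<beta>' n = max (\<beta> n) (- ln (ln (real n)))) at_top"
  proof eventually_elim
    case (elim n)
    have "0 \<le> (real k - 1) * ln (ln (real n))"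
      using k elim(2) by simp
    with elim(3) have "0 \<le> ln (real n) + (real k - 1) * ln (ln (real n)) + - ln (ln (real n))"
      by linarith
    moreover have "r n \<le> 1"
      unfolding r_def using s hP elim(4) by (intro scaling_parameter_le_one) auto
    ultimately show ?case
      using s hP heq elim(1) P_pos
      by (simp add: \<beta>'_def t'_def r_def scaling_equation_iff scaling_deviation_max_parameter)
  qed
  moreover have "filterlim (\<lambda>n. ln (ln (real n))) at_top at_top"
    by real_asymp
  ultimately have "filterlim \<beta>' at_bot at_top" "(\<lambda>n. - \<beta>' n) \<in> O(\<lambda>n. ln (ln (real n)))"
    using filterlim_at_bot_max_uminus[OF hb] by blast+
  moreover have "\<forall>n. coupling_spanning_subgraph
                    (binomial_s_intersection_graph s n (t n) (P n))
                    (binomial_s_intersection_graph s n (t' n) (P n))"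
    using hP t' by (auto intro!: binomial_s_intersection_graph_coupling_mono simp: t'_def)
  ultimately show ?thesis
    using t' eq by blast
qed

lemma binomial_s_intersection_graph_lower_deviation:
  fixes s k :: nat and t :: "nat \<Rightarrow> real" and P :: "nat \<Rightarrow> nat" and \<beta> :: "nat \<Rightarrow> real"
  assumes s: "s \<ge> 1" and k: "k \<ge> 1"
    and hP: "\<forall>n. s \<le> P n \<and> 0 \<le> t n \<and> t n \<le> 1"
    and heq: "\<forall>n\<ge>2. t n ^ (2 * s) * real (P n) ^ s / fact s
                 = (ln (real n) + (real k - 1) * ln (ln (real n)) + \<beta> n) / real n"
    and hb: "filterlim \<beta> at_top at_top"
  shows "\<exists>(t' :: nat \<Rightarrow> real) (P' :: nat \<Rightarrow> nat) (\<beta>' :: nat \<Rightarrow> real).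
           (\<forall>n. s \<le> P' n \<and> 0 \<le> t' n \<and> t' n \<le> 1) \<and>
           (\<forall>n\<ge>2. t' n ^ (2 * s) * real (P' n) ^ s / fact s
                    = (ln (real n) + (real k - 1) * ln (ln (real n)) + \<beta>' n) / real n) \<and>
           filterlim \<beta>' at_top at_top \<and>
           \<beta>' \<in> O(\<lambda>n. ln (ln (real n))) \<and>
           (\<forall>n. coupling_spanning_subgraph
                  (binomial_s_intersection_graph s n (t' n) (P' n))
                  (binomial_s_intersection_graph s n (t n) (P n)))"
proof -
  define r where "r n = scaling_parameter s k n (P n) (ln (ln (real n)))" for n
  define t' where "t' n = min (t n) (r n)" for n
  define \<beta>' where "\<beta>' n = scaling_deviation s k n (t' n) (P n)" for n
  have P_pos: "P n > 0" for n
    using s hP by (auto intro: less_le_trans)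
  have t': "\<forall>n. s \<le> P n \<and> 0 \<le> t' n \<and> t' n \<le> 1"
    using hP scaling_parameter_nonneg by (auto simp: t'_def r_def min_le_iff_disj)
  have eq: "\<forall>n\<ge>2. t' n ^ (2 * s) * real (P n) ^ s / fact s
              = (ln (real n) + (real k - 1) * ln (ln (real n)) + \<beta>' n) / real n"
    by (simp add: scaling_equation_iff \<beta>'_def)
  have "eventually (\<lambda>n. (2::nat) \<le> n) at_top" "eventually (\<lambda>n. 0 \<le> ln (ln (real n))) at_top"
    by real_asymp+
  then have "eventually (\<lambda>n. \<beta>' n = min (\<beta> n) (ln (ln (real n)))) at_top"
  proof eventually_elim
    case (elim n)
    have "0 \<le> (real k - 1) * ln (ln (real n))" "0 \<le> ln (real n)"
      using k elim by simp_all
    with elim(2) have "0 \<le> ln (real n) + (real k - 1) * ln (ln (real n)) + ln (ln (real n))"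
      by linarith
    then show ?case
      using s hP heq elim(1) P_pos
      by (simp add: \<beta>'_def t'_def r_def scaling_equation_iff scaling_deviation_min_parameter)
  qed
  moreover have "filterlim (\<lambda>n. ln (ln (real n))) at_top at_top"
    by real_asymp
  ultimately have "filterlim \<beta>' at_top at_top" "\<beta>' \<in> O(\<lambda>n. ln (ln (real n)))"
    using filterlim_at_top_min[OF hb] by blast+
  moreover have "\<forall>n. coupling_spanning_subgraph
                    (binomial_s_intersection_graph s n (t' n) (P n))
                    (binomial_s_intersection_graph s n (t n) (P n))"
    using hP t' by (auto intro!: binomial_s_intersection_graph_coupling_mono simp: t'_def)
  ultimately show ?thesis
    using t' eq by blast
qed

theorem lemma6:
  fixes s k :: nat
  assumes s: "s \<ge> 1" and k: "k \<ge> 1"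
  shows
  "(\<forall>(t :: nat \<Rightarrow> real) (P :: nat \<Rightarrow> nat) (\<beta> :: nat \<Rightarrow> real).
      (\<forall>n. s \<le> P n \<and> 0 \<le> t n \<and> t n \<le> 1) \<and>
      (\<forall>n\<ge>2. t n ^ (2 * s) * real (P n) ^ s / fact s
               = (ln (real n) + (real k - 1) * ln (ln (real n)) + \<beta> n) / real n) \<and>
      filterlim \<beta> at_bot at_top
      \<longrightarrow>
      (\<exists>(t' :: nat \<Rightarrow> real) (P' :: nat \<Rightarrow> nat) (\<beta>' :: nat \<Rightarrow> real).
         (\<forall>n. s \<le> P' n \<and> 0 \<le> t' n \<and> t' n \<le> 1) \<and>
         (\<forall>n\<ge>2. t' n ^ (2 * s) * real (P' n) ^ s / fact s
                  = (ln (real n) + (real k - 1) * ln (ln (real n)) + \<beta>' n) / real n) \<and>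
         filterlim \<beta>' at_bot at_top \<and>
         (\<lambda>n. - \<beta>' n) \<in> O(\<lambda>n. ln (ln (real n))) \<and>
         (\<forall>n. coupling_spanning_subgraph
                (binomial_s_intersection_graph s n (t n) (P n))
                (binomial_s_intersection_graph s n (t' n) (P' n)))))
   \<and>
   (\<forall>(t :: nat \<Rightarrow> real) (P :: nat \<Rightarrow> nat) (\<beta> :: nat \<Rightarrow> real).
      (\<forall>n. s \<le> P n \<and> 0 \<le> t n \<and> t n \<le> 1) \<and>
      (\<forall>n\<ge>2. t n ^ (2 * s) * real (P n) ^ s / fact s
               = (ln (real n) + (real k - 1) * ln (ln (real n)) + \<beta> n) / real n) \<and>
      filterlim \<beta> at_top at_top
      \<longrightarrow>
      (\<exists>(t' :: nat \<Rightarrow> real) (P' :: nat \<Rightarrow> nat) (\<beta>' :: nat \<Rightarrow> real).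
         (\<forall>n. s \<le> P' n \<and> 0 \<le> t' n \<and> t' n \<le> 1) \<and>
         (\<forall>n\<ge>2. t' n ^ (2 * s) * real (P' n) ^ s / fact s
                  = (ln (real n) + (real k - 1) * ln (ln (real n)) + \<beta>' n) / real n) \<and>
         filterlim \<beta>' at_top at_top \<and>
         \<beta>' \<in> O(\<lambda>n. ln (ln (real n))) \<and>
         (\<forall>n. coupling_spanning_subgraph
                (binomial_s_intersection_graph s n (t' n) (P' n))
                (binomial_s_intersection_graph s n (t n) (P n)))))"
  using binomial_s_intersection_graph_raise_deviation[OF s k]
    binomial_s_intersection_graph_lower_deviation[OF s k]
  by blast

end
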